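(* For all integers $m$ and $n$, \[ \sum_{k = 1}^n ( - 1)^{k - 1} F_{mk}^{\,4} = \frac{F_{mn} F_{mn + m} \left\{ (-1)^{n-1}L_m L_{mn} L_{mn + m} + (-1)^{n(m-1)}4L_{2m} \right\}}{5L_m L_{2m}}\,. \]
   Context: $F_i$ and $L_i$ denote the Fibonacci and Lucas numbers, defined for all $i\in\mathbb{Z}$ by $F_i=F_{i-1}+F_{i-2}$, $F_0=0$, $F_1=1$, and $L_i=L_{i-1}+L_{i-2}$, $L_0=2$, $L_1=1$; equivalently $F_{-i}=(-1)^{i-1}F_i$ and $L_{-i}=(-1)^iL_i$. Summation convention for an arbitrary integer upper limit: $\sum_{k=a}^{a-1} f(k)=0$, and for $n<a-1$, $\sum_{k=a}^{n} f(k) = -\sum_{k=n+1}^{a-1} f(k)$. *)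

theory Defs
  imports Complex_Main
begin

fun fibN :: "nat \<Rightarrow> int" where
  "fibN 0 = 0"
| "fibN (Suc 0) = 1"
| "fibN (Suc (Suc n)) = fibN (Suc n) + fibN n"

fun lucN :: "nat \<Rightarrow> int" where
  "lucN 0 = 2"
| "lucN (Suc 0) = 1"
| "lucN (Suc (Suc n)) = lucN (Suc n) + lucN n"

definition fibZ :: "int \<Rightarrow> int" where
  "fibZ i = (if 0 \<le> i then fibN (nat i) else (-1) ^ (nat (-i) + 1) * fibN (nat (-i)))"

definition lucZ :: "int \<Rightarrow> int" where
  "lucZ i = (if 0 \<le> i then lucN (nat i) else (-1) ^ (nat (-i)) * lucN (nat (-i)))"

text \<open>Sum over k = a..n with arbitrary integer upper limit:
  empty for n = a - 1, and minus the sum over n+1..a-1 for n < a - 1.\<close>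
definition sumZ :: "(int \<Rightarrow> 'b::ab_group_add) \<Rightarrow> int \<Rightarrow> int \<Rightarrow> 'b" where
  "sumZ f a n = (if a \<le> n + 1 then sum f {a..n} else - sum f {n+1..a-1})"

end

theory Submission
  imports Defs
begin

text \<open>With \<open>a = \<phi>^m\<close> and \<open>b = \<psi>^m\<close>, so that \<open>a b = (-1)^m\<close>, Binet's formulas turn both
  sides into Laurent polynomials in \<open>u = a^n\<close> and \<open>v = b^n\<close>. Both sides vanish at \<open>n = 0\<close>, and
  passing from \<open>n\<close> to \<open>n + 1\<close> changes each of them by \<open>(-1)^n F_(m(n+1))^4\<close>: for the
  sum by definition, for the closed form by a polynomial identity in \<open>a, b, u, v\<close> that only
  needs \<open>(a b)^2 = 1\<close>. Hence the two sides agree for every integer \<open>n\<close>.\<close>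

definition phi :: real where "phi = (1 + sqrt 5) / 2"
definition psi :: real where "psi = (1 - sqrt 5) / 2"

lemma phi_times_psi: "phi * psi = -1"
  and phi_minus_psi: "phi - psi = sqrt 5"
  and phi_plus_psi: "phi + psi = 1"
  and phi_square: "phi\<^sup>2 = phi + 1"
  and psi_square: "psi\<^sup>2 = psi + 1"
  by (simp_all add: phi_def psi_def field_simps power2_eq_square)

lemma phi_nonzero: "phi \<noteq> 0" and psi_nonzero: "psi \<noteq> 0"
  using phi_times_psi by auto

lemma power_Suc_Suc_of_square_eq:
  fixes x :: "'a::comm_ring_1"
  assumes "x\<^sup>2 = x + 1"
  shows "x ^ Suc (Suc n) = x ^ Suc n + x ^ n"
proof -
  have "x ^ Suc (Suc n) = x\<^sup>2 * x ^ n" by (simp add: power2_eq_square)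
  then show ?thesis using assms by (simp add: distrib_right)
qed

lemma fibN_Binet: "real_of_int (fibN n) = (phi ^ n - psi ^ n) / sqrt 5"
proof (induction n rule: fibN.induct)
  case (3 n)
  then show ?case
    using power_Suc_Suc_of_square_eq[OF phi_square, of n]
      power_Suc_Suc_of_square_eq[OF psi_square, of n]
    by (simp add: add_divide_distrib[symmetric])
qed (simp_all add: phi_minus_psi)

lemma lucN_Binet: "real_of_int (lucN n) = phi ^ n + psi ^ n"
proof (induction n rule: lucN.induct)
  case (3 n)
  then show ?case
    using power_Suc_Suc_of_square_eq[OF phi_square, of n]
      power_Suc_Suc_of_square_eq[OF psi_square, of n]
    by simp
qed (simp_all add: phi_plus_psi)

lemma phi_powi_neg: "phi powi (- int k) = (- psi) ^ k"
  and psi_powi_neg: "psi powi (- int k) = (- phi) ^ k"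
proof -
  have "inverse phi = - psi" "inverse psi = - phi"
    using phi_times_psi phi_nonzero psi_nonzero by (simp_all add: field_simps)
  then show "phi powi (- int k) = (- psi) ^ k" "psi powi (- int k) = (- phi) ^ k"
    by (simp_all add: power_int_minus flip: power_inverse)
qed

lemma fibZ_Binet: "real_of_int (fibZ i) = (phi powi i - psi powi i) / sqrt 5"
proof (cases "0 \<le> i")
  case True
  then obtain k where "i = int k" by (metis nonneg_int_cases)
  then show ?thesis by (simp add: fibZ_def fibN_Binet)
next
  case False
  define k where "k = nat (- i)"
  with False have i: "i = - int k" by simp
  with False have "real_of_int (fibZ i) = (-1) ^ (k + 1) * ((phi ^ k - psi ^ k) / sqrt 5)"
    by (simp add: fibZ_def fibN_Binet)
  also have "\<dots> = ((- psi) ^ k - (- phi) ^ k) / sqrt 5"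
    unfolding power_minus[of psi] power_minus[of phi] by (simp add: algebra_simps)
  finally show ?thesis by (simp add: i phi_powi_neg psi_powi_neg)
qed

lemma lucZ_Binet: "real_of_int (lucZ i) = phi powi i + psi powi i"
proof (cases "0 \<le> i")
  case True
  then obtain k where "i = int k" by (metis nonneg_int_cases)
  then show ?thesis by (simp add: lucZ_def lucN_Binet)
next
  case False
  define k where "k = nat (- i)"
  with False have i: "i = - int k" by simp
  with False have "real_of_int (lucZ i) = (-1) ^ k * (phi ^ k + psi ^ k)"
    by (simp add: lucZ_def lucN_Binet)
  also have "\<dots> = (- psi) ^ k + (- phi) ^ k"
    unfolding power_minus[of psi] power_minus[of phi] by (simp add: algebra_simps)
  finally show ?thesis by (simp add: i phi_powi_neg psi_powi_neg)
qed

lemma lucN_pos: "lucN n > 0"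
  by (induction n rule: lucN.induct) auto

lemma lucZ_nonzero: "lucZ i \<noteq> 0"
  using lucN_pos[of "nat i"] lucN_pos[of "nat (- i)"] by (auto simp: lucZ_def)

lemma sumZ_diff_succ:
  fixes f :: "int \<Rightarrow> 'a::ab_group_add"
  shows "sumZ f a (n + 1) - sumZ f a n = f (n + 1)"
proof (cases "a \<le> n + 1")
  case True
  then have "{a..n + 1} = insert (n + 1) {a..n}" by auto
  with True show ?thesis by (simp add: sumZ_def)
next
  case False
  then have "{n + 1..a - 1} = insert (n + 1) {n + 1 + 1..a - 1}" by auto
  with False show ?thesis unfolding sumZ_def by simp
qed

lemma int_fun_eqI_by_differences:
  fixes S R :: "int \<Rightarrow> 'a::ab_group_add"
  assumes "S 0 = R 0" and "\<And>n. S (n + 1) - S n = R (n + 1) - R n"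
  shows "S n = R n"
proof (induction n rule: int_induct[where k = 0])
  case base
  show ?case by (fact assms(1))
next
  case (step1 i)
  then show ?case using assms(2)[of i] by (simp add: algebra_simps)
next
  case (step2 i)
  then show ?case using assms(2)[of "i - 1"] by (simp add: algebra_simps)
qed

text \<open>For \<open>a = \<phi>^m\<close>, \<open>b = \<psi>^m\<close>, \<open>u = a^n\<close>, \<open>v = b^n\<close>, \<open>g = (-1)^n\<close> this is
  \<open>25 L_m L_(2m)\<close> times the right-hand side of the theorem; the sign \<open>(-1)^(n(m-1))\<close>
  becomes \<open>u v g\<close>.\<close>
definition binet_numerator :: "'a \<Rightarrow> 'a \<Rightarrow> 'a \<Rightarrow> 'a \<Rightarrow> 'a \<Rightarrow> 'a::comm_ring_1" where
  "binet_numerator a b u v g =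
     (u - v) * (u * a - v * b) *
     (- g * (a + b) * (u + v) * (u * a + v * b) + u * v * g * 4 * (a\<^sup>2 + b\<^sup>2))"

lemma binet_numerator_shift_diff:
  fixes a b u v g :: "'a::idom"
  assumes "(a * b)\<^sup>2 = 1"
  shows "binet_numerator a b (u * a) (v * b) (- g) - binet_numerator a b u v g
           = g * (a + b) * (a\<^sup>2 + b\<^sup>2) * (u * a - v * b) ^ 4"
  using assms unfolding binet_numerator_def by algebra

lemma fibZ_mult_Binet:
  "real_of_int (fibZ (m * k)) = ((phi powi m) powi k - (psi powi m) powi k) / sqrt 5"
  by (simp add: fibZ_Binet power_int_mult)

lemma lucZ_mult_Binet: "real_of_int (lucZ (m * k)) = (phi powi m) powi k + (psi powi m) powi k"
  by (simp add: lucZ_Binet power_int_mult)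

lemma minus_one_powi_mult_pred:
  "(-1::real) powi (k * (m - 1)) = ((-1) powi m) powi k * (-1) powi k"
proof -
  have "(-1::real) powi (k * (m - 1)) = (-1) powi (m * k) * (-1) powi (- k)"
    by (simp add: algebra_simps flip: power_int_add)
  then show ?thesis by (simp add: power_int_mult power_int_minus_one_minus)
qed

lemma phi_powi_times_psi_powi: "phi powi m * psi powi m = (-1) powi m"
  by (simp add: phi_times_psi flip: power_int_mult_distrib)

definition alternating_fib_quartic_sum :: "int \<Rightarrow> int \<Rightarrow> real" where
  "alternating_fib_quartic_sum m n = sumZ (\<lambda>k. (-1) powi (k - 1) * (real_of_int (fibZ (m * k))) ^ 4) 1 n"

definition fib_quartic_closed_form :: "int \<Rightarrow> int \<Rightarrow> real" where
  "fib_quartic_closed_form m n =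
    real_of_int (fibZ (m * n)) * real_of_int (fibZ (m * n + m)) *
      ((-1) powi (n - 1) * real_of_int (lucZ m) * real_of_int (lucZ (m * n)) * real_of_int (lucZ (m * n + m))
       + (-1) powi (n * (m - 1)) * 4 * real_of_int (lucZ (2 * m)))
    / (5 * real_of_int (lucZ m) * real_of_int (lucZ (2 * m)))"

lemma fib_quartic_closed_form_Binet:
  fixes m k :: int
  defines "a \<equiv> phi powi m" and "b \<equiv> psi powi m"
  shows "fib_quartic_closed_form m k
           = binet_numerator a b (a powi k) (b powi k) ((-1) powi k) / (25 * ((a + b) * (a\<^sup>2 + b\<^sup>2)))"
proof -
  have succ: "a powi (k + 1) = a powi k * a" "b powi (k + 1) = b powi k * b"
    by (simp_all add: a_def b_def power_int_add_1 phi_nonzero psi_nonzero)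
  have ab: "a * b = (-1) powi m"
    unfolding a_def b_def by (rule phi_powi_times_psi_powi)
  have F: "real_of_int (fibZ (m * k)) * real_of_int (fibZ (m * k + m))
             = (a powi k - b powi k) * (a powi k * a - b powi k * b) / 5"
    using fibZ_mult_Binet[of m k] fibZ_mult_Binet[of m "k + 1"]
    by (simp add: distrib_left succ flip: a_def b_def)
  have L: "real_of_int (lucZ m) = a + b" "real_of_int (lucZ (2 * m)) = a\<^sup>2 + b\<^sup>2"
    "real_of_int (lucZ (m * k)) = a powi k + b powi k"
    "real_of_int (lucZ (m * k + m)) = a powi k * a + b powi k * b"
    using lucZ_mult_Binet[of m 1] lucZ_mult_Binet[of m 2] lucZ_mult_Binet[of m k]
      lucZ_mult_Binet[of m "k + 1"]
    by (simp_all add: distrib_left succ mult.commute flip: a_def b_def)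
  have sign: "(-1::real) powi (k - 1) = - ((-1) powi k)"
    "(-1::real) powi (k * (m - 1)) = a powi k * b powi k * (-1) powi k"
    by (simp_all add: power_int_diff minus_one_powi_mult_pred flip: ab power_int_mult_distrib)
  have "fib_quartic_closed_form m k = (a powi k - b powi k) * (a powi k * a - b powi k * b) / 5
      * (- ((-1) powi k) * (a + b) * (a powi k + b powi k) * (a powi k * a + b powi k * b)
         + a powi k * b powi k * (-1) powi k * 4 * (a\<^sup>2 + b\<^sup>2)) / (5 * (a + b) * (a\<^sup>2 + b\<^sup>2))"
    unfolding fib_quartic_closed_form_def F L sign ..
  then show ?thesis
    by (simp add: binet_numerator_def mult.assoc)
qed

lemma fib_quartic_closed_form_diff_succ:
  "fib_quartic_closed_form m (k + 1) - fib_quartic_closed_form m k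
     = (-1) powi k * real_of_int (fibZ (m * (k + 1))) ^ 4"
proof -
  define a where "a = phi powi m"
  define b where "b = psi powi m"
  define D where "D = (a + b) * (a\<^sup>2 + b\<^sup>2)"
  define g where "g = (-1::real) powi k"
  have ab2: "(a * b)\<^sup>2 = 1"
    unfolding a_def b_def phi_powi_times_psi_powi
    by (simp add: power2_eq_square flip: power_int_mult_distrib)
  have "D \<noteq> 0"
    using lucZ_nonzero[of m] lucZ_nonzero[of "2 * m"] lucZ_mult_Binet[of m 1] lucZ_mult_Binet[of m 2]
    by (simp add: D_def a_def b_def mult.commute phi_nonzero psi_nonzero)
  have succ: "a powi (k + 1) = a powi k * a" "b powi (k + 1) = b powi k * b" "(-1) powi (k + 1) = - g"
    by (simp_all add: a_def b_def g_def power_int_add_1 phi_nonzero psi_nonzero)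
  have "fib_quartic_closed_form m (k + 1) - fib_quartic_closed_form m k
      = (binet_numerator a b (a powi k * a) (b powi k * b) (- g)
         - binet_numerator a b (a powi k) (b powi k) g) / (25 * D)"
    unfolding fib_quartic_closed_form_Binet[of m, folded a_def b_def] succ
      D_def[symmetric] g_def[symmetric] diff_divide_distrib ..
  also have "\<dots> = g * (a powi k * a - b powi k * b) ^ 4 * D / (25 * D)"
    unfolding binet_numerator_shift_diff[OF ab2] D_def by (simp only: mult_ac)
  also have "\<dots> = g * ((a powi (k + 1) - b powi (k + 1)) / sqrt 5) ^ 4"
    using \<open>D \<noteq> 0\<close> power_mult[of "sqrt 5" 2 2] by (simp add: succ power_divide)
  also have "\<dots> = (-1) powi k * real_of_int (fibZ (m * (k + 1))) ^ 4"
    by (simp add: fibZ_mult_Binet a_def b_def g_def)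
  finally show ?thesis .
qed

theorem theorem3:
  fixes m n :: int
  shows "sumZ (\<lambda>k. (-1) powi (k - 1) * (real_of_int (fibZ (m * k))) ^ 4) 1 n =
    real_of_int (fibZ (m * n)) * real_of_int (fibZ (m * n + m)) *
      ((-1) powi (n - 1) * real_of_int (lucZ m) * real_of_int (lucZ (m * n)) * real_of_int (lucZ (m * n + m))
       + (-1) powi (n * (m - 1)) * 4 * real_of_int (lucZ (2 * m)))
    / (5 * real_of_int (lucZ m) * real_of_int (lucZ (2 * m)))"
proof -
  have "alternating_fib_quartic_sum m n = fib_quartic_closed_form m n"
  proof (rule int_fun_eqI_by_differences)
    show "alternating_fib_quartic_sum m 0 = fib_quartic_closed_form m 0"
      by (simp add: alternating_fib_quartic_sum_def fib_quartic_closed_form_def sumZ_def fibZ_def)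
    show "alternating_fib_quartic_sum m (k + 1) - alternating_fib_quartic_sum m k
        = fib_quartic_closed_form m (k + 1) - fib_quartic_closed_form m k" for k
      by (simp add: alternating_fib_quartic_sum_def sumZ_diff_succ fib_quartic_closed_form_diff_succ)
  qed
  then show ?thesis
    unfolding alternating_fib_quartic_sum_def fib_quartic_closed_form_def .
qed

end
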